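(* For $v \in l^2(\mathbb{T}_t; \mathbb{R}^{m_2})$, $k\in\mathbb{T}_t$, $\widetilde{v}_k \in l^2(k; \mathbb{R}^{m_2})$ and $\varepsilon \in\mathbb{R}$, let $v^\varepsilon_\ell=v_k+\varepsilon \widetilde{v}_k$ if $\ell=k$ and $v^\varepsilon_\ell=v_\ell$ if $\ell\neq k$, $\ell\in \mathbb{T}_t$, and $v^\varepsilon=(v_t^\varepsilon, \ldots, v^\varepsilon_{N-1})$. Then \begin{eqnarray*} &&J_2(k, X_k; \alpha^t(x, v^\varepsilon)|_{\mathbb{T}_{k}}, (v_k+\varepsilon \widetilde{v}_k, v|_{\mathbb{T}_{k+1}}))- J_2(k, X_k; \alpha^t(x, v)|_{\mathbb{T}_{k}}, v|_{\mathbb{T}_{k}})\\ &&=2\varepsilon \Big{[}\widetilde{B}_k^TZ_{k+1}+\widetilde{B}_{k}^T\overline{Z}_{k+1}^{(k)}+W_2v_k +(H_k^2)^TR_2(H_k^1X_k+H_k^2v_k+H_k^3\pi_{k+1})\\ &&\hphantom{=}+\sum_{i=t}^{k-1}C_{k}\widetilde{A}_{k-1}\cdots \widetilde{A}_{i+1}\widetilde{C}_{i}^T\overline{Z}_{i+1}^{(k)} \Big{]}^T\widetilde{v}_k+\varepsilon^2\widehat{J}_2(k, 0; \widetilde{v}_k). \end{eqnarray*} Here $(X,\pi)$ solves $X_{k+1}=\widetilde{A}_kX_k+\widetilde{B}_kv_{k}+\widetilde{C}_k\pi_{k+1}$, $\pi_k=C_k^Tv_k+\widetilde{A}_k^T\pi_{k+1}$,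 $X_t=x$, $\pi_N=0$, $k\in\mathbb{T}_t$; $Z$ solves $Z_k=Q_2X_{k}+A^TZ_{k+1}$, $Z_{N}=G_2X_N$, $k \in \mathbb{T}_t$; and for each $k\in\mathbb{T}_t$, $\overline{Z}^{(k)}$ solves $\overline{Z}^{(k)}_{\ell}=(H_{\ell}^1)^TR_2(H_{\ell}^1X_{\ell}+H^2_{\ell}v_{\ell}+H^3_{\ell}\pi_{\ell+1})-(H_{\ell}^1)^TB_1^TZ_{\ell+1}+\widetilde{A}_{\ell}^T\overline{Z}^{(k)}_{\ell+1}$ for $\ell\in\mathbb{T}_{k}$, $\overline{Z}^{(k)}_{i}=\widetilde{A}_{i}^T\overline{Z}^{(k)}_{i+1}$ for $i\in \{t, \ldots,k-1\}$, $\overline{Z}^{(k)}_{N}=0$. Furthermore, \begin{eqnarray*} \widehat{J}_2(k, 0; \widetilde{v}_k)&=&\sum_{\ell=k}^{N-1}\xi_\ell^TQ_2\xi_\ell+ \sum_{\ell=k+1}^{N-1}(\eta^{(k)}_{\ell})^T(H_{\ell}^1)^TR_2H_{\ell}^1\eta^{(k)}_{\ell} + \widetilde{v}_k^TW_{2} \widetilde{v}_k \\ &&+\xi_{N}^TG_2\xi_{N}+(H_k^1\eta^{(k)}_k+H^2_k \widetilde{v}_k)^TR_2(H_k^1\eta^{(k)}_k+H^2_k \widetilde{v}_k), \end{eqnarray*} where $\eta^{(k)}_{t}=0$, $\eta^{(k)}_{i+1}=\widetilde{A}_{i}\eta^{(k)}_{i}+ \widetilde{C}_{i} \widetilde{A}_{i+1}^T\cdots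 \widetilde{A}_{k-1}^TC_{k}^T\widetilde{v}_k$ for $i\in \{t, \ldots, k-1\}$, $\eta^{(k)}_{k+1}=\widetilde{A}_k\eta^{(k)}_k+ \widetilde{B}_k\widetilde{v}_k$, $\eta^{(k)}_{\ell+1}=\widetilde{A}_\ell\eta^{(k)}_{\ell}$ for $\ell\in \mathbb{T}_{k+1}$; and $\xi_k=0$, $\xi_{k+1}=A\xi_k-B_1H_k^1\eta^{(k)}_k+ \widetilde{B}_k\widetilde{v}_k$, $\xi_{\ell+1}=A\xi_\ell-B_1H_{\ell}^1\eta^{(k)}_{\ell}$ for $\ell\in \mathbb{T}_{k+1}$. The product $\widetilde{A}_{i+1}^T\cdots \widetilde{A}_{k-1}^T$ equals $I$ if $i+1>k-1$, and $\widetilde{A}_{k-1}\cdots \widetilde{A}_{i+1}$ is its transpose.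
   Context: Let $N>2$ be an integer, $\mathbb{T}_t=\{t,\ldots,N-1\}$ for $t\in\{0,\ldots,N-1\}$, $l^2(\mathbb{T}_t;\mathbb{R}^m)$ the space of sequences $\{\rho_k,k\in\mathbb{T}_t\}$ with $\rho_k\in\mathbb{R}^m$, $l^2(k;\mathbb{R}^m)=\mathbb{R}^m$, and for a process $v$ let $v|_{\mathbb{T}_k}=(v_k,\ldots,v_{N-1})$. Consider the system $X_{k+1}=AX_k+B_1u_k+B_2v_k$, $X_t=x$, $k\in\mathbb{T}_t$, with cost functionals $J_i(t,x;u,v)=\sum_{k=t}^{N-1}(X_k^TQ_iX_k+u_k^TR_iu_k+v_k^TW_iv_k)+X_N^TG_iX_N$, $i=1,2$, deterministic matrices and $Q_i,G_i,R_i,W_i$ nonnegative definite; $J_i(k,y;\cdot,\cdot)$ denotes the same functional started at time $k$ from state $y$ with controls on $\mathbb{T}_k$ (the state inside is propagated by the original dynamics). Assume $M_k=B_1^TP_{k+1}B_1+R_1$, $k\in\mathbb{T}_t$, are positive definite, where $P_k=Q_1+A^TP_{k+1}A-A^TP_{k+1}B_1M_k^{-1}B_1^TP_{k+1}A$, $P_N=G_1$. Set $H^1_k=M_k^{-1}B_1^TP_{k+1}A$, $H^2_k=M_k^{-1}B_1^TP_{k+1}B_2$, $H^3_k=M_k^{-1}B_1^T$, $\widetilde{A}_k=A-B_1H^1_k$, $\widetilde{B}_k=B_2-B_1H^2_k$, $\widetilde{C}_k=-B_1H^3_k$, $C_k=(B_2^T-B_2^TP_{k+1}B_1M_k^{-1}B_1^T)P_{k+1}A$.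 The follower's equilibrium response map is $[\alpha^t(x,v)]_k=-(H^1_kX_k+H^2_kv_k+H^3_k\pi_{k+1})$, $k\in\mathbb{T}_t$, where $(X,\pi)$ solves $X_{k+1}=\widetilde{A}_kX_k+\widetilde{B}_kv_k+\widetilde{C}_k\pi_{k+1}$, $\pi_k=C_k^Tv_k+\widetilde{A}_k^T\pi_{k+1}$, $X_t=x$, $\pi_N=0$. *)

theory Defs
  imports "HOL-Analysis.Analysis"
begin

text \<open>Dimension types: 'n = state (R^n), 'a = follower control (R^m1), 'b = leader control (R^m2).
  Sequences indexed by time are functions nat => vector; only the indices in the relevant
  time window matter.\<close>

primrec fwd_aux :: "(nat \<Rightarrow> 'x \<Rightarrow> 'x) \<Rightarrow> nat \<Rightarrow> 'x \<Rightarrow> nat \<Rightarrow> 'x" where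
  "fwd_aux f t x 0 = x"
| "fwd_aux f t x (Suc j) = f (t + j) (fwd_aux f t x j)"

definition fwd :: "(nat \<Rightarrow> 'x \<Rightarrow> 'x) \<Rightarrow> nat \<Rightarrow> 'x \<Rightarrow> nat \<Rightarrow> 'x" where
  "fwd f t x k = fwd_aux f t x (k - t)"

primrec bwd_aux :: "(nat \<Rightarrow> 'x \<Rightarrow> 'x) \<Rightarrow> nat \<Rightarrow> 'x \<Rightarrow> nat \<Rightarrow> 'x" where
  "bwd_aux f N y 0 = y"
| "bwd_aux f N y (Suc j) = f (N - Suc j) (bwd_aux f N y j)"

definition bwd :: "(nat \<Rightarrow> 'x \<Rightarrow> 'x) \<Rightarrow> nat \<Rightarrow> 'x \<Rightarrow> nat \<Rightarrow> 'x" where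
  "bwd f N y k = bwd_aux f N y (N - k)"

primrec mprod :: "(nat \<Rightarrow> real^'n^'n) \<Rightarrow> nat \<Rightarrow> nat \<Rightarrow> real^'n^'n" where
  "mprod F lo 0 = mat 1"
| "mprod F lo (Suc n) = F (lo + n) ** mprod F lo n"

definition quad :: "real^'n^'n \<Rightarrow> real^'n \<Rightarrow> real" where
  "quad M x = x \<bullet> (M *v x)"

definition nonneg_def :: "real^'n^'n \<Rightarrow> bool" where
  "nonneg_def M \<longleftrightarrow> transpose M = M \<and> (\<forall>x. 0 \<le> quad M x)"

definition pos_def :: "real^'n^'n \<Rightarrow> bool" where
  "pos_def M \<longleftrightarrow> transpose M = M \<and> (\<forall>x. x \<noteq> 0 \<longrightarrow> 0 < quad M x)"

definition Pm :: "real^'n^'n \<Rightarrow> real^'a^'n \<Rightarrow> real^'n^'n \<Rightarrow> real^'a^'a \<Rightarrow> real^'n^'n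
                   \<Rightarrow> nat \<Rightarrow> nat \<Rightarrow> real^'n^'n" where
  "Pm A B1 Q1 R1 G1 N k = bwd (\<lambda>j P. Q1 + transpose A ** P ** A
        - transpose A ** P ** B1 ** matrix_inv (transpose B1 ** P ** B1 + R1) ** transpose B1 ** P ** A)
        N G1 k"

definition Mm :: "real^'n^'n \<Rightarrow> real^'a^'n \<Rightarrow> real^'n^'n \<Rightarrow> real^'a^'a \<Rightarrow> real^'n^'n
                   \<Rightarrow> nat \<Rightarrow> nat \<Rightarrow> real^'a^'a" where
  "Mm A B1 Q1 R1 G1 N k = transpose B1 ** Pm A B1 Q1 R1 G1 N (Suc k) ** B1 + R1"

definition H1 :: "real^'n^'n \<Rightarrow> real^'a^'n \<Rightarrow> real^'n^'n \<Rightarrow> real^'a^'a \<Rightarrow> real^'n^'n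
                   \<Rightarrow> nat \<Rightarrow> nat \<Rightarrow> real^'n^'a" where
  "H1 A B1 Q1 R1 G1 N k = matrix_inv (Mm A B1 Q1 R1 G1 N k) ** transpose B1
        ** Pm A B1 Q1 R1 G1 N (Suc k) ** A"

definition H2 :: "real^'n^'n \<Rightarrow> real^'a^'n \<Rightarrow> real^'b^'n \<Rightarrow> real^'n^'n \<Rightarrow> real^'a^'a \<Rightarrow> real^'n^'n
                   \<Rightarrow> nat \<Rightarrow> nat \<Rightarrow> real^'b^'a" where
  "H2 A B1 B2 Q1 R1 G1 N k = matrix_inv (Mm A B1 Q1 R1 G1 N k) ** transpose B1
        ** Pm A B1 Q1 R1 G1 N (Suc k) ** B2"

definition H3 :: "real^'n^'n \<Rightarrow> real^'a^'n \<Rightarrow> real^'n^'n \<Rightarrow> real^'a^'a \<Rightarrow> real^'n^'n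
                   \<Rightarrow> nat \<Rightarrow> nat \<Rightarrow> real^'n^'a" where
  "H3 A B1 Q1 R1 G1 N k = matrix_inv (Mm A B1 Q1 R1 G1 N k) ** transpose B1"

definition Atil :: "real^'n^'n \<Rightarrow> real^'a^'n \<Rightarrow> real^'n^'n \<Rightarrow> real^'a^'a \<Rightarrow> real^'n^'n
                   \<Rightarrow> nat \<Rightarrow> nat \<Rightarrow> real^'n^'n" where
  "Atil A B1 Q1 R1 G1 N k = A - B1 ** H1 A B1 Q1 R1 G1 N k"

definition Btil :: "real^'n^'n \<Rightarrow> real^'a^'n \<Rightarrow> real^'b^'n \<Rightarrow> real^'n^'n \<Rightarrow> real^'a^'a \<Rightarrow> real^'n^'n
                   \<Rightarrow> nat \<Rightarrow> nat \<Rightarrow> real^'b^'n" where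
  "Btil A B1 B2 Q1 R1 G1 N k = B2 - B1 ** H2 A B1 B2 Q1 R1 G1 N k"

definition Ctil :: "real^'n^'n \<Rightarrow> real^'a^'n \<Rightarrow> real^'n^'n \<Rightarrow> real^'a^'a \<Rightarrow> real^'n^'n
                   \<Rightarrow> nat \<Rightarrow> nat \<Rightarrow> real^'n^'n" where
  "Ctil A B1 Q1 R1 G1 N k = - (B1 ** H3 A B1 Q1 R1 G1 N k)"

definition Cm :: "real^'n^'n \<Rightarrow> real^'a^'n \<Rightarrow> real^'b^'n \<Rightarrow> real^'n^'n \<Rightarrow> real^'a^'a \<Rightarrow> real^'n^'n
                   \<Rightarrow> nat \<Rightarrow> nat \<Rightarrow> real^'n^'b" where
  "Cm A B1 B2 Q1 R1 G1 N k =
     (transpose B2 - transpose B2 ** Pm A B1 Q1 R1 G1 N (Suc k) ** B1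
        ** matrix_inv (Mm A B1 Q1 R1 G1 N k) ** transpose B1)
     ** Pm A B1 Q1 R1 G1 N (Suc k) ** A"

definition piS :: "real^'n^'n \<Rightarrow> real^'a^'n \<Rightarrow> real^'b^'n \<Rightarrow> real^'n^'n \<Rightarrow> real^'a^'a \<Rightarrow> real^'n^'n
                   \<Rightarrow> nat \<Rightarrow> (nat \<Rightarrow> real^'b) \<Rightarrow> nat \<Rightarrow> real^'n" where
  "piS A B1 B2 Q1 R1 G1 N v k =
     bwd (\<lambda>j p. transpose (Cm A B1 B2 Q1 R1 G1 N j) *v v j
                + transpose (Atil A B1 Q1 R1 G1 N j) *v p) N 0 k"

definition XS :: "real^'n^'n \<Rightarrow> real^'a^'n \<Rightarrow> real^'b^'n \<Rightarrow> real^'n^'n \<Rightarrow> real^'a^'a \<Rightarrow> real^'n^'n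
                   \<Rightarrow> nat \<Rightarrow> nat \<Rightarrow> real^'n \<Rightarrow> (nat \<Rightarrow> real^'b) \<Rightarrow> nat \<Rightarrow> real^'n" where
  "XS A B1 B2 Q1 R1 G1 N t x v k =
     fwd (\<lambda>j X. Atil A B1 Q1 R1 G1 N j *v X + Btil A B1 B2 Q1 R1 G1 N j *v v j
                + Ctil A B1 Q1 R1 G1 N j *v piS A B1 B2 Q1 R1 G1 N v (Suc j)) t x k"

definition alpha :: "real^'n^'n \<Rightarrow> real^'a^'n \<Rightarrow> real^'b^'n \<Rightarrow> real^'n^'n \<Rightarrow> real^'a^'a \<Rightarrow> real^'n^'n
                   \<Rightarrow> nat \<Rightarrow> nat \<Rightarrow> real^'n \<Rightarrow> (nat \<Rightarrow> real^'b) \<Rightarrow> nat \<Rightarrow> real^'a" where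
  "alpha A B1 B2 Q1 R1 G1 N t x v k =
     - (H1 A B1 Q1 R1 G1 N k *v XS A B1 B2 Q1 R1 G1 N t x v k
        + H2 A B1 B2 Q1 R1 G1 N k *v v k
        + H3 A B1 Q1 R1 G1 N k *v piS A B1 B2 Q1 R1 G1 N v (Suc k))"

definition Xo :: "real^'n^'n \<Rightarrow> real^'a^'n \<Rightarrow> real^'b^'n \<Rightarrow> nat \<Rightarrow> real^'n
                   \<Rightarrow> (nat \<Rightarrow> real^'a) \<Rightarrow> (nat \<Rightarrow> real^'b) \<Rightarrow> nat \<Rightarrow> real^'n" where
  "Xo A B1 B2 k y u v l = fwd (\<lambda>j X. A *v X + B1 *v u j + B2 *v v j) k y l"

definition Jc :: "real^'n^'n \<Rightarrow> real^'a^'n \<Rightarrow> real^'b^'n \<Rightarrow> real^'n^'n \<Rightarrow> real^'a^'a \<Rightarrow> real^'b^'b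
                   \<Rightarrow> real^'n^'n \<Rightarrow> nat \<Rightarrow> nat \<Rightarrow> real^'n
                   \<Rightarrow> (nat \<Rightarrow> real^'a) \<Rightarrow> (nat \<Rightarrow> real^'b) \<Rightarrow> real" where
  "Jc A B1 B2 Q R W G N k y u v =
     (\<Sum>l = k..<N. quad Q (Xo A B1 B2 k y u v l) + quad R (u l) + quad W (v l))
     + quad G (Xo A B1 B2 k y u v N)"


definition Zs :: "real^'n^'n \<Rightarrow> real^'a^'n \<Rightarrow> real^'b^'n \<Rightarrow> real^'n^'n \<Rightarrow> real^'a^'a \<Rightarrow> real^'n^'n
                   \<Rightarrow> real^'n^'n \<Rightarrow> real^'n^'n
                   \<Rightarrow> nat \<Rightarrow> nat \<Rightarrow> real^'n \<Rightarrow> (nat \<Rightarrow> real^'b) \<Rightarrow> nat \<Rightarrow> real^'n" where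
  "Zs A B1 B2 Q1 R1 G1 Q2 G2 N t x v =
     (let X = XS A B1 B2 Q1 R1 G1 N t x v
      in bwd (\<lambda>j z. Q2 *v X j + transpose A *v z) N (G2 *v X N))"

definition Zbar :: "real^'n^'n \<Rightarrow> real^'a^'n \<Rightarrow> real^'b^'n \<Rightarrow> real^'n^'n \<Rightarrow> real^'a^'a \<Rightarrow> real^'n^'n
                   \<Rightarrow> real^'n^'n \<Rightarrow> real^'a^'a \<Rightarrow> real^'n^'n
                   \<Rightarrow> nat \<Rightarrow> nat \<Rightarrow> real^'n \<Rightarrow> (nat \<Rightarrow> real^'b) \<Rightarrow> nat \<Rightarrow> nat \<Rightarrow> real^'n" where
  "Zbar A B1 B2 Q1 R1 G1 Q2 R2 G2 N t x v k =
     (let X = XS A B1 B2 Q1 R1 G1 N t x v; \<pi> = piS A B1 B2 Q1 R1 G1 N v;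
          Z = Zs A B1 B2 Q1 R1 G1 Q2 G2 N t x v;
          HH1 = H1 A B1 Q1 R1 G1 N; HH2 = H2 A B1 B2 Q1 R1 G1 N; HH3 = H3 A B1 Q1 R1 G1 N;
          AT = Atil A B1 Q1 R1 G1 N
      in bwd (\<lambda>l z. if k \<le> l
               then transpose (HH1 l) *v (R2 *v (HH1 l *v X l + HH2 l *v v l + HH3 l *v \<pi> (Suc l)))
                    - transpose (HH1 l) *v (transpose B1 *v Z (Suc l))
                    + transpose (AT l) *v z
               else transpose (AT l) *v z) N 0)"

text \<open>Note mprod AT (i+1) (k-(i+1)) = Atil_(k-1) ** ... ** Atil_(i+1).\<close>
definition eta :: "real^'n^'n \<Rightarrow> real^'a^'n \<Rightarrow> real^'b^'n \<Rightarrow> real^'n^'n \<Rightarrow> real^'a^'a \<Rightarrow> real^'n^'n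
                   \<Rightarrow> nat \<Rightarrow> nat \<Rightarrow> nat \<Rightarrow> real^'b \<Rightarrow> nat \<Rightarrow> real^'n" where
  "eta A B1 B2 Q1 R1 G1 N t k vt =
     (let AT = Atil A B1 Q1 R1 G1 N; BT = Btil A B1 B2 Q1 R1 G1 N; CT = Ctil A B1 Q1 R1 G1 N;
          C = Cm A B1 B2 Q1 R1 G1 N
      in fwd (\<lambda>i e. if i < k
               then AT i *v e + CT i *v (transpose (mprod AT (Suc i) (k - Suc i)) *v (transpose (C k) *v vt))
               else if i = k then AT i *v e + BT i *v vt
               else AT i *v e) t 0)"

definition xi :: "real^'n^'n \<Rightarrow> real^'a^'n \<Rightarrow> real^'b^'n \<Rightarrow> real^'n^'n \<Rightarrow> real^'a^'a \<Rightarrow> real^'n^'n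
                   \<Rightarrow> nat \<Rightarrow> nat \<Rightarrow> nat \<Rightarrow> real^'b \<Rightarrow> nat \<Rightarrow> real^'n" where
  "xi A B1 B2 Q1 R1 G1 N t k vt =
     (let \<eta> = eta A B1 B2 Q1 R1 G1 N t k vt; HH1 = H1 A B1 Q1 R1 G1 N;
          BT = Btil A B1 B2 Q1 R1 G1 N
      in fwd (\<lambda>l s. if l = k
               then A *v s - B1 *v (HH1 l *v \<eta> l) + BT l *v vt
               else A *v s - B1 *v (HH1 l *v \<eta> l)) k 0)"

definition Jhat :: "real^'n^'n \<Rightarrow> real^'a^'n \<Rightarrow> real^'b^'n \<Rightarrow> real^'n^'n \<Rightarrow> real^'a^'a \<Rightarrow> real^'n^'n
                   \<Rightarrow> real^'n^'n \<Rightarrow> real^'a^'a \<Rightarrow> real^'b^'b \<Rightarrow> real^'n^'n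
                   \<Rightarrow> nat \<Rightarrow> nat \<Rightarrow> nat \<Rightarrow> real^'b \<Rightarrow> real" where
  "Jhat A B1 B2 Q1 R1 G1 Q2 R2 W2 G2 N t k vt =
     (let \<eta> = eta A B1 B2 Q1 R1 G1 N t k vt; \<xi> = xi A B1 B2 Q1 R1 G1 N t k vt;
          HH1 = H1 A B1 Q1 R1 G1 N; HH2 = H2 A B1 B2 Q1 R1 G1 N
      in (\<Sum>l = k..<N. quad Q2 (\<xi> l))
         + (\<Sum>l = Suc k..<N. quad (transpose (HH1 l) ** R2 ** HH1 l) (\<eta> l))
         + quad W2 vt + quad G2 (\<xi> N)
         + quad R2 (HH1 k *v \<eta> k + HH2 k *v vt))"

end

theory Submission
  imports Defs
begin

text \<open>The follower's state, costate and response map are affine in the leader's control, so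
the perturbation v^\<epsilon> = v + \<epsilon> impulse k vt changes the follower's control by
\<epsilon> \<alpha>^t(0, impulse k vt). Since J_2 is quadratic, its increment is 2\<epsilon> times a bilinear first
variation plus \<epsilon>^2 times the cost of the perturbation alone, which is Jhat_2 (the perturbed
states being \<eta>^(k) and \<xi>). The first variation becomes an inner product with vt after two
summations by parts: against Z along the open-loop matrix A, and against Zbar^(k) along the
closed-loop matrices Atil. The latter also collects the response of the costate \<pi> to the
impulse, which reaches back to the times before k.\<close>

lemma fwd_start [simp]: "fwd f t x t = x"
  by (simp add: fwd_def)

lemma fwd_Suc: "t \<le> j \<Longrightarrow> fwd f t x (Suc j) = f j (fwd f t x j)"
  by (simp add: fwd_def Suc_diff_le)

lemma bwd_beyond: "N \<le> j \<Longrightarrow> bwd f N y j = y"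
  by (simp add: bwd_def)

lemma bwd_step: "j < N \<Longrightarrow> bwd f N y j = f j (bwd f N y (Suc j))"
proof -
  assume "j < N"
  then have "N - j = Suc (N - Suc j)" and "N - Suc (N - Suc j) = j"
    by simp_all
  then show ?thesis
    unfolding bwd_def by simp
qed

lemma mprod_Suc_low: "mprod F lo (Suc n) = mprod F (Suc lo) n ** F lo"
  by (induction n) (simp_all add: matrix_mul_lid matrix_mul_rid matrix_mul_assoc)

declare transpose_matrix_vector [simp del]

lemma inner_matrix_vector_transpose: "(A *v x) \<bullet> (y::real^'n) = (x::real^'m) \<bullet> (transpose A *v y)"
  by (metis dot_lmul_matrix inner_commute transpose_matrix_vector)

lemma matrix_vector_mult_uminus_left: "(- A) *v x = - (A *v (x::real^'m))"
  by (metis diff_0 matrix_vector_mult_0 matrix_vector_mult_diff_rdistrib)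

lemma transpose_diff: "transpose (A - B) = transpose A - transpose (B::real^'m^'n)"
  by (simp add: transpose_def vec_eq_iff)

lemma quad_add_scaleR:
  assumes "transpose M = M"
  shows "quad M (a + e *\<^sub>R b) = quad M a + 2 * e * (b \<bullet> (M *v a)) + e\<^sup>2 * quad M b"
proof -
  have "a \<bullet> (M *v b) = b \<bullet> (M *v a)"
    by (metis assms inner_commute inner_matrix_vector_transpose)
  then show ?thesis
    unfolding quad_def
    by (simp add: algebra_simps power2_eq_square)
qed

lemma quad_uminus [simp]: "quad M (- a) = quad M a"
  by (simp add: quad_def vec.neg)

lemma quad_congruence: "quad (transpose H ** R ** H) x = quad R (H *v x)"
  unfolding quad_def
  by (metis inner_matrix_vector_transpose matrix_vector_mul_assoc)

lemma adjoint_summation_by_parts: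
  fixes a b f g :: "nat \<Rightarrow> real^'n" and M :: "nat \<Rightarrow> real^'n^'n"
  assumes "m \<le> n"
    and a_Suc: "\<And>l. m \<le> l \<Longrightarrow> l < n \<Longrightarrow> a (Suc l) = M l *v a l + f l"
    and b_step: "\<And>l. m \<le> l \<Longrightarrow> l < n \<Longrightarrow> b l = transpose (M l) *v b (Suc l) + g l"
  shows "(\<Sum>l=m..<n. a l \<bullet> g l) + a n \<bullet> b n = a m \<bullet> b m + (\<Sum>l=m..<n. f l \<bullet> b (Suc l))"
  using assms(1)
proof (induction m rule: inc_induct)
  case base
  then show ?case by simp
next
  case (step m)
  have "g m = b m - transpose (M m) *v b (Suc m)"
    using b_step[of m] step.hyps by simp
  then have "a m \<bullet> g m = a m \<bullet> b m - (M m *v a m) \<bullet> b (Suc m)"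
    by (simp add: inner_diff_right inner_matrix_vector_transpose)
  also have "\<dots> = a m \<bullet> b m - a (Suc m) \<bullet> b (Suc m) + f m \<bullet> b (Suc m)"
    using a_Suc[of m] step.hyps by (simp add: inner_add_left)
  finally show ?case
    using step by (simp add: sum.atLeast_Suc_lessThan)
qed

lemma Xo_start [simp]: "Xo A B1 B2 k y u v k = y"
  by (simp add: Xo_def)

lemma Xo_Suc:
  "k \<le> l \<Longrightarrow> Xo A B1 B2 k y u v (Suc l) = A *v Xo A B1 B2 k y u v l + B1 *v u l + B2 *v v l"
  by (simp add: Xo_def fwd_Suc)

lemma Xo_add_scaleR:
  assumes "\<And>j. k \<le> j \<Longrightarrow> u' j = u j + e *\<^sub>R du j"
    and "\<And>j. k \<le> j \<Longrightarrow> v' j = v j + e *\<^sub>R dv j"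
    and "k \<le> l"
  shows "Xo A B1 B2 k y u' v' l = Xo A B1 B2 k y u v l + e *\<^sub>R Xo A B1 B2 k 0 du dv l"
  using assms(3)
proof (induction l rule: dec_induct)
  case base
  then show ?case by simp
next
  case (step l)
  then show ?case
    using assms(1,2)[of l] by (simp add: Xo_Suc algebra_simps)
qed

lemma Jc_add_scaleR:
  fixes A :: "real^'n^'n" and B1 :: "real^'a^'n" and B2 :: "real^'b^'n" and y :: "real^'n"
  assumes u': "\<And>j. k \<le> j \<Longrightarrow> u' j = u j + e *\<^sub>R du j"
    and v': "\<And>j. k \<le> j \<Longrightarrow> v' j = v j + e *\<^sub>R dv j"
    and "k \<le> N"
    and sym: "transpose Q = Q" "transpose R = R" "transpose W = W" "transpose G = G"
  defines "X \<equiv> Xo A B1 B2 k y u v" and "\<xi> \<equiv> Xo A B1 B2 k 0 du dv"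
  shows "Jc A B1 B2 Q R W G N k y u' v' - Jc A B1 B2 Q R W G N k y u v
     = 2 * e * ((\<Sum>l=k..<N. \<xi> l \<bullet> (Q *v X l) + du l \<bullet> (R *v u l) + dv l \<bullet> (W *v v l))
                + \<xi> N \<bullet> (G *v X N))
       + e\<^sup>2 * Jc A B1 B2 Q R W G N k 0 du dv"
proof -
  let ?c = "\<lambda>Y p q l. quad Q (Y l) + quad R (p l) + quad W (q l)"
  have X': "Xo A B1 B2 k y u' v' l = X l + e *\<^sub>R \<xi> l" if "k \<le> l" for l
    unfolding X_def \<xi>_def using Xo_add_scaleR[OF u' v' that] .
  have "?c (Xo A B1 B2 k y u' v') u' v' l = ?c X u v l
          + 2 * e * (\<xi> l \<bullet> (Q *v X l) + du l \<bullet> (R *v u l) + dv l \<bullet> (W *v v l))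
          + e\<^sup>2 * ?c \<xi> du dv l" if "k \<le> l" for l
    unfolding X'[OF that] u'[OF that] v'[OF that] quad_add_scaleR[OF sym(1)]
      quad_add_scaleR[OF sym(2)] quad_add_scaleR[OF sym(3)]
    by (simp add: algebra_simps)
  then have "(\<Sum>l=k..<N. ?c (Xo A B1 B2 k y u' v') u' v' l) = (\<Sum>l=k..<N. ?c X u v l
          + 2 * e * (\<xi> l \<bullet> (Q *v X l) + du l \<bullet> (R *v u l) + dv l \<bullet> (W *v v l))
          + e\<^sup>2 * ?c \<xi> du dv l)"
    by (intro sum.cong) simp_all
  then show ?thesis
    unfolding Jc_def X'[OF \<open>k \<le> N\<close>] quad_add_scaleR[OF sym(4)]
    by (simp add: X_def \<xi>_def sum.distrib sum_distrib_left algebra_simps)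
qed

definition impulse :: "nat \<Rightarrow> 'a::zero \<Rightarrow> nat \<Rightarrow> 'a" where
  "impulse k a j = (if j = k then a else 0)"

lemma impulse_same [simp]: "impulse k a k = a"
  and impulse_other [simp]: "j \<noteq> k \<Longrightarrow> impulse k a j = 0"
  by (simp_all add: impulse_def)

locale lq_leader_follower =
  fixes A :: "real^'n^'n" and B1 :: "real^'a^'n" and B2 :: "real^'b^'n"
    and Q1 :: "real^'n^'n" and R1 :: "real^'a^'a" and G1 :: "real^'n^'n"
    and Q2 :: "real^'n^'n" and R2 :: "real^'a^'a" and W2 :: "real^'b^'b" and G2 :: "real^'n^'n"
    and N :: nat
begin

abbreviation "HH1 \<equiv> H1 A B1 Q1 R1 G1 N"
abbreviation "HH2 \<equiv> H2 A B1 B2 Q1 R1 G1 N"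
abbreviation "HH3 \<equiv> H3 A B1 Q1 R1 G1 N"
abbreviation "AT \<equiv> Atil A B1 Q1 R1 G1 N"
abbreviation "BT \<equiv> Btil A B1 B2 Q1 R1 G1 N"
abbreviation "CT \<equiv> Ctil A B1 Q1 R1 G1 N"
abbreviation "C \<equiv> Cm A B1 B2 Q1 R1 G1 N"
abbreviation "\<pi> \<equiv> piS A B1 B2 Q1 R1 G1 N"
abbreviation "X \<equiv> XS A B1 B2 Q1 R1 G1 N"
abbreviation "\<alpha> \<equiv> alpha A B1 B2 Q1 R1 G1 N"
abbreviation "Z \<equiv> Zs A B1 B2 Q1 R1 G1 Q2 G2 N"
abbreviation "Zb \<equiv> Zbar A B1 B2 Q1 R1 G1 Q2 R2 G2 N"
abbreviation "J2 \<equiv> Jc A B1 B2 Q2 R2 W2 G2 N"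

lemma piS_beyond: "N \<le> j \<Longrightarrow> \<pi> v j = 0"
  by (simp add: piS_def bwd_beyond)

lemma piS_step: "j < N \<Longrightarrow> \<pi> v j = transpose (C j) *v v j + transpose (AT j) *v \<pi> v (Suc j)"
  unfolding piS_def by (subst bwd_step) simp_all

lemma piS_add_scaleR: "\<pi> (\<lambda>j. v j + e *\<^sub>R w j) j = \<pi> v j + e *\<^sub>R \<pi> w j"
proof (cases "j \<le> N")
  case True
  then show ?thesis
  proof (induction j rule: inc_induct)
    case base
    then show ?case by (simp add: piS_beyond)
  next
    case (step j)
    then show ?case by (simp add: piS_step algebra_simps)
  qed
qed (simp add: piS_beyond)

lemma piS_impulse_after: "k < j \<Longrightarrow> \<pi> (impulse k a) j = 0"
proof (cases "j \<le> N")
  case True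
  then show "k < j \<Longrightarrow> ?thesis"
  proof (induction j rule: inc_induct)
    case base
    then show ?case by (simp add: piS_beyond)
  next
    case (step j)
    then show ?case by (simp add: piS_step)
  qed
qed (simp add: piS_beyond)

lemma piS_impulse_upto:
  assumes "k < N" and "j \<le> k"
  shows "\<pi> (impulse k a) j = transpose (mprod AT j (k - j)) *v (transpose (C k) *v a)"
  using assms(2)
proof (induction j rule: inc_induct)
  case base
  then show ?case using assms(1) by (simp add: piS_step piS_impulse_after)
next
  case (step j)
  have "\<pi> (impulse k a) j = transpose (AT j) *v \<pi> (impulse k a) (Suc j)"
    using step.hyps assms(1) by (simp add: piS_step)
  also have "\<dots> = transpose (mprod AT j (k - j)) *v (transpose (C k) *v a)"
    using step.hyps Suc_diff_Suc[of j k, symmetric]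
    by (simp add: step.IH mprod_Suc_low matrix_transpose_mul matrix_vector_mul_assoc
        matrix_mul_assoc del: mprod.simps)
  finally show ?case .
qed

lemma XS_start [simp]: "X t x v t = x"
  by (simp add: XS_def)

lemma XS_Suc:
  "t \<le> j \<Longrightarrow> X t x v (Suc j) = AT j *v X t x v j + BT j *v v j + CT j *v \<pi> v (Suc j)"
  by (simp add: XS_def fwd_Suc)

lemma XS_add_scaleR:
  "t \<le> j \<Longrightarrow> X t x (\<lambda>j. v j + e *\<^sub>R w j) j = X t x v j + e *\<^sub>R X t 0 w j"
proof (induction j rule: dec_induct)
  case base
  then show ?case by simp
next
  case (step j)
  then show ?case by (simp add: XS_Suc piS_add_scaleR algebra_simps)
qed

lemma alpha_add_scaleR:
  "t \<le> j \<Longrightarrow> \<alpha> t x (\<lambda>j. v j + e *\<^sub>R w j) j = \<alpha> t x v j + e *\<^sub>R \<alpha> t 0 w j"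
  by (simp add: alpha_def XS_add_scaleR piS_add_scaleR algebra_simps)

lemma alpha_impulse_after:
  "k \<le> l \<Longrightarrow> \<alpha> t 0 (impulse k a) l
     = - (HH1 l *v X t 0 (impulse k a) l + HH2 l *v (impulse k a) l)"
  by (simp add: alpha_def piS_impulse_after)

lemma Xo_alpha:
  assumes "t \<le> k" and "k \<le> l"
  shows "Xo A B1 B2 k (X t x v k) (\<alpha> t x v) v l = X t x v l"
  using assms(2)
proof (induction l rule: dec_induct)
  case base
  then show ?case by simp
next
  case (step l)
  then have "t \<le> l" using assms(1) by linarith
  then show ?case
    using step
    by (simp add: Xo_Suc XS_Suc alpha_def Atil_def Btil_def Ctil_def algebra_simps
        matrix_vector_mul_assoc[symmetric] matrix_vector_mult_uminus_left vec.neg)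
qed

lemma eta_eq_XS_impulse:
  assumes "k < N" and "t \<le> j"
  shows "eta A B1 B2 Q1 R1 G1 N t k a j = X t 0 (impulse k a) j"
  using assms(2)
proof (induction j rule: dec_induct)
  case base
  then show ?case by (simp add: eta_def Let_def)
next
  case (step j)
  then show ?case
    using assms(1)
    by (auto simp: eta_def Let_def fwd_Suc XS_Suc piS_impulse_upto piS_impulse_after)
qed

lemma xi_eq_Xo:
  assumes "t \<le> k" and "k < N" and "k \<le> l"
  shows "xi A B1 B2 Q1 R1 G1 N t k a l
    = Xo A B1 B2 k 0 (\<alpha> t 0 (impulse k a)) (impulse k a) l"
  using assms(3)
proof (induction l rule: dec_induct)
  case base
  then show ?case by (simp add: xi_def Let_def)
next
  case (step l)
  then show ?case
    using assms
    by (auto simp: xi_def Let_def fwd_Suc Xo_Suc eta_eq_XS_impulse alpha_impulse_after Btil_def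
        algebra_simps matrix_vector_mul_assoc[symmetric] vec.neg)
qed

lemma Zs_end: "Z t x v N = G2 *v X t x v N"
  by (simp add: Zs_def Let_def bwd_beyond)

lemma Zs_step: "l < N \<Longrightarrow> Z t x v l = transpose A *v Z t x v (Suc l) + Q2 *v X t x v l"
  unfolding Zs_def Let_def by (subst bwd_step) (simp_all add: add.commute)

lemma Zbar_end: "Zb t x v k N = 0"
  by (simp add: Zbar_def Let_def bwd_beyond)

lemma Zbar_step:
  "l < N \<Longrightarrow> Zb t x v k l = transpose (AT l) *v Zb t x v k (Suc l)
     + (if k \<le> l then - (transpose (HH1 l) *v (R2 *v \<alpha> t x v l + transpose B1 *v Z t x v (Suc l)))
        else 0)"
  unfolding Zbar_def Let_def
  by (subst bwd_step) (simp_all add: alpha_def vec.neg algebra_simps)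

lemma Jhat_eq_Jc:
  assumes "t \<le> k" and "k < N"
  shows "Jhat A B1 B2 Q1 R1 G1 Q2 R2 W2 G2 N t k a
    = Jc A B1 B2 Q2 R2 W2 G2 N k 0 (\<alpha> t 0 (impulse k a)) (impulse k a)"
proof -
  let ?w = "impulse k a" and ?\<eta> = "eta A B1 B2 Q1 R1 G1 N t k a"
  let ?du = "\<alpha> t 0 ?w" and ?\<xi> = "Xo A B1 B2 k 0 (\<alpha> t 0 ?w) ?w"
  have du: "quad R2 (?du l) = quad R2 (HH1 l *v ?\<eta> l + HH2 l *v ?w l)" if "k \<le> l" for l
    unfolding alpha_impulse_after[OF that] quad_uminus
    using that assms by (simp add: eta_eq_XS_impulse)
  have "(\<Sum>l=k..<N. quad R2 (?du l)) = quad R2 (?du k) + (\<Sum>l=Suc k..<N. quad R2 (?du l))"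
    using assms(2) by (simp add: sum.atLeast_Suc_lessThan)
  also have "\<dots> = quad R2 (HH1 k *v ?\<eta> k + HH2 k *v a)
      + (\<Sum>l=Suc k..<N. quad (transpose (HH1 l) ** R2 ** HH1 l) (?\<eta> l))"
    by (simp add: du quad_congruence)
  finally have R_terms: "(\<Sum>l=k..<N. quad R2 (?du l)) = \<dots>" .
  have "(\<Sum>l=k..<N. quad W2 (?w l)) = quad W2 a + (\<Sum>l=Suc k..<N. quad W2 (?w l))"
    using assms(2) by (simp add: sum.atLeast_Suc_lessThan)
  also have "(\<Sum>l=Suc k..<N. quad W2 (?w l)) = 0"
    by (intro sum.neutral) (simp add: quad_def)
  finally have W_terms: "(\<Sum>l=k..<N. quad W2 (?w l)) = quad W2 a"
    by simp
  have Q_terms: "(\<Sum>l=k..<N. quad Q2 (xi A B1 B2 Q1 R1 G1 N t k a l)) = (\<Sum>l=k..<N. quad Q2 (?\<xi> l))"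
    using assms by (intro sum.cong) (simp_all add: xi_eq_Xo)
  show ?thesis
    using assms
    by (simp add: Jhat_def Jc_def Let_def sum.distrib R_terms W_terms Q_terms xi_eq_Xo)
qed

lemma Xo_Zs_duality:
  assumes "k \<le> N"
  shows "(\<Sum>l=k..<N. Xo A B1 B2 k 0 du dv l \<bullet> (Q2 *v X t x v l))
      + Xo A B1 B2 k 0 du dv N \<bullet> (G2 *v X t x v N)
    = (\<Sum>l=k..<N. (B1 *v du l + B2 *v dv l) \<bullet> Z t x v (Suc l))"
proof -
  have "(\<Sum>l=k..<N. Xo A B1 B2 k 0 du dv l \<bullet> (Q2 *v X t x v l))
      + Xo A B1 B2 k 0 du dv N \<bullet> Z t x v N
    = Xo A B1 B2 k 0 du dv k \<bullet> Z t x v k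
      + (\<Sum>l=k..<N. (B1 *v du l + B2 *v dv l) \<bullet> Z t x v (Suc l))"
    by (rule adjoint_summation_by_parts[where M = "\<lambda>_. A"])
      (simp_all add: assms Xo_Suc Zs_step add.assoc)
  then show ?thesis
    by (simp add: Zs_end)
qed

lemma XS_impulse_Zbar_duality:
  assumes "t \<le> k" and "k < N"
  shows "(\<Sum>l=k..<N. X t 0 (impulse k a) l
          \<bullet> - (transpose (HH1 l) *v (R2 *v \<alpha> t x v l + transpose B1 *v Z t x v (Suc l))))
    = a \<bullet> (transpose (BT k) *v Zb t x v k (Suc k))
      + (\<Sum>i=t..<k. a \<bullet> (C k *v (mprod AT (Suc i) (k - Suc i) *v (transpose (CT i) *v Zb t x v k (Suc i)))))"
proof -
  let ?w = "impulse k a" and ?\<eta> = "X t 0 (impulse k a)" and ?Zb = "Zb t x v k"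
  let ?g = "\<lambda>l. - (transpose (HH1 l) *v (R2 *v \<alpha> t x v l + transpose B1 *v Z t x v (Suc l)))"
  let ?f = "\<lambda>l. BT l *v ?w l + CT l *v \<pi> ?w (Suc l)"
  txt \<open>Sum by parts over all of [t, N): Zbar has no forcing before k, whereas before k the
    impulse still drives \<eta> through the costate term CT \<pi>.\<close>
  have "(\<Sum>l=t..<N. ?\<eta> l \<bullet> (if k \<le> l then ?g l else 0)) + ?\<eta> N \<bullet> ?Zb N
      = ?\<eta> t \<bullet> ?Zb t + (\<Sum>l=t..<N. ?f l \<bullet> ?Zb (Suc l))"
    by (rule adjoint_summation_by_parts[where M = AT])
      (use assms in \<open>simp_all add: XS_Suc Zbar_step add.assoc\<close>)
  moreover have "(\<Sum>l=t..<N. ?\<eta> l \<bullet> (if k \<le> l then ?g l else 0)) = (\<Sum>l=k..<N. ?\<eta> l \<bullet> ?g l)"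
  proof -
    have "(\<Sum>l=t..<N. ?\<eta> l \<bullet> (if k \<le> l then ?g l else 0))
        = (\<Sum>l=t..<k. ?\<eta> l \<bullet> (if k \<le> l then ?g l else 0))
          + (\<Sum>l=k..<N. ?\<eta> l \<bullet> (if k \<le> l then ?g l else 0))"
      using assms by (intro sum.atLeastLessThan_concat[symmetric]) simp_all
    then show ?thesis
      by (simp add: sum.neutral cong: sum.cong_simp)
  qed
  moreover have "(\<Sum>l=t..<N. ?f l \<bullet> ?Zb (Suc l)) = (\<Sum>l=t..<Suc k. ?f l \<bullet> ?Zb (Suc l))"
  proof -
    have "(\<Sum>l=t..<N. ?f l \<bullet> ?Zb (Suc l))
        = (\<Sum>l=t..<Suc k. ?f l \<bullet> ?Zb (Suc l)) + (\<Sum>l=Suc k..<N. ?f l \<bullet> ?Zb (Suc l))"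
      using assms by (intro sum.atLeastLessThan_concat[symmetric]) simp_all
    then show ?thesis
      by (simp add: sum.neutral piS_impulse_after)
  qed
  moreover have "?f i \<bullet> ?Zb (Suc i)
      = a \<bullet> (C k *v (mprod AT (Suc i) (k - Suc i) *v (transpose (CT i) *v ?Zb (Suc i))))"
    if "i < k" for i
    using that assms(2) by (simp add: piS_impulse_upto inner_matrix_vector_transpose)
  ultimately show ?thesis
    using assms
    by (simp add: Zbar_end piS_impulse_after inner_matrix_vector_transpose)
qed

lemma first_variation:
  fixes a :: "real^'b" and x :: "real^'n" and v :: "nat \<Rightarrow> real^'b" and t k :: nat
  assumes "t \<le> k" and "k < N"
  defines "w \<equiv> impulse k a" and "u \<equiv> \<alpha> t x v" and "du \<equiv> \<alpha> t 0 (impulse k a)"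
    and "\<xi> \<equiv> Xo A B1 B2 k 0 (\<alpha> t 0 (impulse k a)) (impulse k a)"
    and "Y \<equiv> Xo A B1 B2 k (X t x v k) (\<alpha> t x v) v"
  shows "(\<Sum>l=k..<N. \<xi> l \<bullet> (Q2 *v Y l) + du l \<bullet> (R2 *v u l) + w l \<bullet> (W2 *v v l))
      + \<xi> N \<bullet> (G2 *v Y N)
    = (transpose (BT k) *v Z t x v (Suc k) + transpose (BT k) *v Zb t x v k (Suc k) + W2 *v v k
       + transpose (HH2 k) *v (R2 *v (HH1 k *v X t x v k + HH2 k *v v k + HH3 k *v \<pi> v (Suc k)))
       + (\<Sum>i=t..<k. C k *v (mprod AT (Suc i) (k - Suc i) *v (transpose (CT i) *v Zb t x v k (Suc i)))))
      \<bullet> a"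
proof -
  let ?\<eta> = "X t 0 w" and ?Z = "\<lambda>l. Z t x v (Suc l)"
  let ?g = "\<lambda>l. - (transpose (HH1 l) *v (R2 *v u l + transpose B1 *v ?Z l))"
  let ?S = "\<lambda>l. transpose (BT l) *v ?Z l - transpose (HH2 l) *v (R2 *v u l) + W2 *v v l"
  have Y: "Y l = X t x v l" if "k \<le> l" for l
    using assms(1) that by (simp add: Y_def Xo_alpha)
  have pointwise: "(B1 *v du l + B2 *v w l) \<bullet> ?Z l + du l \<bullet> (R2 *v u l) + w l \<bullet> (W2 *v v l)
      = ?\<eta> l \<bullet> ?g l + w l \<bullet> ?S l" if "k \<le> l" for l
  proof -
    have du: "du l = - (HH1 l *v ?\<eta> l + HH2 l *v w l)"
      using that by (simp add: du_def w_def alpha_impulse_after)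
    show ?thesis
      unfolding du Btil_def
      by (simp add: inner_matrix_vector_transpose algebra_simps transpose_diff matrix_transpose_mul
          matrix_vector_mul_assoc[symmetric] vec.neg)
  qed
  have "(\<Sum>l=k..<N. \<xi> l \<bullet> (Q2 *v Y l) + du l \<bullet> (R2 *v u l) + w l \<bullet> (W2 *v v l)) + \<xi> N \<bullet> (G2 *v Y N)
      = (\<Sum>l=k..<N. \<xi> l \<bullet> (Q2 *v X t x v l)) + \<xi> N \<bullet> (G2 *v X t x v N)
        + (\<Sum>l=k..<N. du l \<bullet> (R2 *v u l) + w l \<bullet> (W2 *v v l))"
    using assms(2) by (simp add: Y sum.distrib add.assoc cong: sum.cong_simp)
  also have "\<dots> = (\<Sum>l=k..<N. (B1 *v du l + B2 *v w l) \<bullet> ?Z l + du l \<bullet> (R2 *v u l) + w l \<bullet> (W2 *v v l))"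
    using assms(2) by (simp add: \<xi>_def du_def w_def Xo_Zs_duality sum.distrib add.assoc)
  also have "\<dots> = (\<Sum>l=k..<N. ?\<eta> l \<bullet> ?g l + w l \<bullet> ?S l)"
    by (simp add: pointwise cong: sum.cong_simp)
  also have "\<dots> = (\<Sum>l=k..<N. ?\<eta> l \<bullet> ?g l) + a \<bullet> ?S k"
    using assms(2) by (simp add: sum.distrib sum.atLeast_Suc_lessThan w_def sum.neutral)
  also have "\<dots> = a \<bullet> (transpose (BT k) *v Zb t x v k (Suc k))
      + (\<Sum>i=t..<k. a \<bullet> (C k *v (mprod AT (Suc i) (k - Suc i) *v (transpose (CT i) *v Zb t x v k (Suc i)))))
      + a \<bullet> ?S k"
    using XS_impulse_Zbar_duality[OF assms(1,2), of a x v] by (simp add: u_def w_def)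
  finally show ?thesis
    by (simp add: u_def alpha_def inner_commute[of a] inner_sum_left algebra_simps vec.neg)
qed

lemma J2_impulse_perturbation:
  fixes v :: "nat \<Rightarrow> real^'b" and a :: "real^'b" and e :: real
  assumes "t \<le> k" and "k < N"
    and sym: "transpose Q2 = Q2" "transpose R2 = R2" "transpose W2 = W2" "transpose G2 = G2"
  defines "v' \<equiv> \<lambda>j. v j + e *\<^sub>R impulse k a j"
  shows "J2 k (X t x v k) (\<alpha> t x v') v' - J2 k (X t x v k) (\<alpha> t x v) v
    = 2 * e * ((transpose (BT k) *v Z t x v (Suc k) + transpose (BT k) *v Zb t x v k (Suc k) + W2 *v v k
          + transpose (HH2 k) *v (R2 *v (HH1 k *v X t x v k + HH2 k *v v k + HH3 k *v \<pi> v (Suc k)))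
          + (\<Sum>i=t..<k. C k *v (mprod AT (Suc i) (k - Suc i) *v (transpose (CT i) *v Zb t x v k (Suc i)))))
        \<bullet> a)
      + e\<^sup>2 * Jhat A B1 B2 Q1 R1 G1 Q2 R2 W2 G2 N t k a"
proof -
  have u': "\<alpha> t x v' j = \<alpha> t x v j + e *\<^sub>R \<alpha> t 0 (impulse k a) j" if "k \<le> j" for j
    unfolding v'_def using assms(1) that by (simp add: alpha_add_scaleR)
  have v': "v' j = v j + e *\<^sub>R impulse k a j" for j
    by (simp add: v'_def)
  from Jc_add_scaleR[where A = A and ?B1.0 = B1 and ?B2.0 = B2 and y = "X t x v k"
      and u' = "\<alpha> t x v'" and u = "\<alpha> t x v" and du = "\<alpha> t 0 (impulse k a)"
      and v' = v' and v = v and dv = "impulse k a", OF u' v' less_imp_le[OF assms(2)] sym]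
  show ?thesis
    unfolding first_variation[OF assms(1,2)] Jhat_eq_Jc[OF assms(1,2)] .
qed

end

theorem proposition1:
  fixes A :: "real^'n^'n" and B1 :: "real^'a^'n" and B2 :: "real^'b^'n"
    and Q1 Q2 G1 G2 :: "real^'n^'n" and R1 R2 :: "real^'a^'a" and W1 W2 :: "real^'b^'b"
    and N t k :: nat and x :: "real^'n" and v :: "nat \<Rightarrow> real^'b"
    and vt :: "real^'b" and \<epsilon> :: real
  assumes "N > 2" and "t \<le> N - 1" and "t \<le> k" and "k \<le> N - 1"
    and "nonneg_def Q1" and "nonneg_def Q2" and "nonneg_def G1" and "nonneg_def G2"
    and "nonneg_def R1" and "nonneg_def R2" and "nonneg_def W1" and "nonneg_def W2"
    and "\<And>j. t \<le> j \<Longrightarrow> j \<le> N - 1 \<Longrightarrow> pos_def (Mm A B1 Q1 R1 G1 N j)"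
  defines "HH1 \<equiv> H1 A B1 Q1 R1 G1 N"
    and "HH2 \<equiv> H2 A B1 B2 Q1 R1 G1 N"
    and "HH3 \<equiv> H3 A B1 Q1 R1 G1 N"
    and "AT \<equiv> Atil A B1 Q1 R1 G1 N"
    and "BT \<equiv> Btil A B1 B2 Q1 R1 G1 N"
    and "CT \<equiv> Ctil A B1 Q1 R1 G1 N"
    and "C \<equiv> Cm A B1 B2 Q1 R1 G1 N"
    and "\<pi> \<equiv> piS A B1 B2 Q1 R1 G1 N v"
    and "X \<equiv> XS A B1 B2 Q1 R1 G1 N t x v"
    and "Z \<equiv> Zs A B1 B2 Q1 R1 G1 Q2 G2 N t x v"
    and "Zb \<equiv> Zbar A B1 B2 Q1 R1 G1 Q2 R2 G2 N t x v k"
    and "J2 \<equiv> Jc A B1 B2 Q2 R2 W2 G2 N"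
    and "veps \<equiv> v(k := v k + \<epsilon> *\<^sub>R vt)"
  shows "J2 k (X k) (alpha A B1 B2 Q1 R1 G1 N t x veps) veps
           - J2 k (X k) (alpha A B1 B2 Q1 R1 G1 N t x v) v
         = 2 * \<epsilon> * ((transpose (BT k) *v Z (Suc k) + transpose (BT k) *v Zb (Suc k) + W2 *v v k
                  + transpose (HH2 k) *v (R2 *v (HH1 k *v X k + HH2 k *v v k + HH3 k *v \<pi> (Suc k)))
                  + (\<Sum>i = t..<k. C k *v (mprod AT (Suc i) (k - Suc i) *v (transpose (CT i) *v Zb (Suc i)))))
                 \<bullet> vt)
           + \<epsilon>\<^sup>2 * Jhat A B1 B2 Q1 R1 G1 Q2 R2 W2 G2 N t k vt"
proof -
  have "k < N"
    using assms(1,4) by linarith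
  have sym: "transpose Q2 = Q2" "transpose R2 = R2" "transpose W2 = W2" "transpose G2 = G2"
    using assms(6,10,12,8) by (simp_all add: nonneg_def_def)
  have "veps = (\<lambda>j. v j + \<epsilon> *\<^sub>R impulse k vt j)"
    by (auto simp: veps_def impulse_def)
  then show ?thesis
    unfolding assms(14-25)
    by (simp only: lq_leader_follower.J2_impulse_perturbation[OF assms(3) \<open>k < N\<close> sym])
qed

end
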